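(* Let $d\ge2$, $\gamma\ge2d$ and $v\in\Lambda_\gamma=\{0,\dots,\gamma-1\}^{\mathbb Z^d}$. The following are equivalent: (1) $v\in\mathcal R_\infty^{(\gamma)}$; (2) for every nonzero $h\in R_d$ with all coefficients in $\{0,1\}$, there is $\mathbf n\in\mathrm{supp}(h)$ with $(f^{(d,\gamma)}\cdot h)_{\mathbf n}+v_{\mathbf n}\ge\gamma$; (3) for every $h\in R_d$ having at least one positive coefficient, there is $\mathbf n$ with $h_{\mathbf n}>0$ and $(f^{(d,\gamma)}\cdot h)_{\mathbf n}+v_{\mathbf n}\ge\gamma$. Furthermore, if $v,v'\in\mathcal R_\infty^{(\gamma)}$ and $0\ne v-v'\in R_d$, then $v-v'\notin f^{(d,\gamma)}\cdot R_d$.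
   Context: $R_d=\mathbb Z[u_1^{\pm1},\dots,u_d^{\pm1}]$, identified with finitely supported integer sequences on $\mathbb Z^d$; $\mathrm{supp}(h)=\{\mathbf n:h_{\mathbf n}\ne0\}$; $(a\cdot b)_{\mathbf n}=\sum_{\mathbf k}a_{\mathbf k}b_{\mathbf n-\mathbf k}$. $f^{(d,\gamma)}=\gamma-\sum_{i=1}^d(u_i+u_i^{-1})$. For a nonempty $F\subset\mathbb Z^d$ and $\mathbf n\in F$, $\mathsf N_F(\mathbf n)=|F\cap\{\mathbf n\pm\mathbf e^{(i)}:i=1,\dots,d\}|$ ($\mathbf e^{(i)}$ the unit vectors). The sandpile model with parameter $\gamma$ is $\mathcal R^{(\gamma)}_\infty=\{v\in\Lambda_\gamma:$ for every finite nonempty $F\subset\mathbb Z^d$ there is $\mathbf n\in F$ with $v_{\mathbf n}\ge\mathsf N_F(\mathbf n)\}$ (the recurrent configurations). *)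

theory Defs
  imports Main
begin

text \<open>Points of Z^d are integer lists of length d.  Finitely supported integer
sequences on Z^d (elements of R_d, Laurent polynomials) and configurations are
functions int list => int that vanish off Z^d.\<close>

definition pts :: "nat \<Rightarrow> int list set" where
  "pts d = {n. length n = d}"

definition vadd :: "int list \<Rightarrow> int list \<Rightarrow> int list" where
  "vadd a b = (if length a = length b then map2 (+) a b else a)"

definition vsub :: "int list \<Rightarrow> int list \<Rightarrow> int list" where
  "vsub a b = (if length a = length b then map2 (-) a b else a)"

definition vneg :: "int list \<Rightarrow> int list" where
  "vneg a = map uminus a"

definition unitv :: "nat \<Rightarrow> nat \<Rightarrow> int list" where
  "unitv d i = map (\<lambda>j. if j = i then 1 else 0) [0..<d]"

definition supp :: "(int list \<Rightarrow> int) \<Rightarrow> int list set" where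
  "supp h = {n. h n \<noteq> 0}"

definition Rd :: "nat \<Rightarrow> (int list \<Rightarrow> int) set" where
  "Rd d = {h. finite (supp h) \<and> supp h \<subseteq> pts d}"

definition conv :: "(int list \<Rightarrow> int) \<Rightarrow> (int list \<Rightarrow> int) \<Rightarrow> int list \<Rightarrow> int" where
  "conv a b n = (\<Sum>k\<in>supp a. a k * b (vsub n k))"

text \<open>f^(d,gamma) = gamma - sum_i (u_i + u_i^-1) as a coefficient sequence.\<close>
definition fpoly :: "nat \<Rightarrow> int \<Rightarrow> int list \<Rightarrow> int" where
  "fpoly d \<gamma> n =
     (if n = replicate d 0 then \<gamma>
      else if (\<exists>i<d. n = unitv d i \<or> n = vneg (unitv d i)) then -1 else 0)"

definition Lambda :: "nat \<Rightarrow> int \<Rightarrow> (int list \<Rightarrow> int) set" where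
  "Lambda d \<gamma> = {v. (\<forall>n\<in>pts d. 0 \<le> v n \<and> v n \<le> \<gamma> - 1) \<and> (\<forall>n. n \<notin> pts d \<longrightarrow> v n = 0)}"

definition nbcount :: "nat \<Rightarrow> int list set \<Rightarrow> int list \<Rightarrow> nat" where
  "nbcount d F n = card (F \<inter> {m. \<exists>i<d. m = vadd n (unitv d i) \<or> m = vsub n (unitv d i)})"

definition recurrent :: "nat \<Rightarrow> int \<Rightarrow> (int list \<Rightarrow> int) set" where
  "recurrent d \<gamma> = {v \<in> Lambda d \<gamma>. \<forall>F. finite F \<and> F \<noteq> {} \<and> F \<subseteq> pts d \<longrightarrow>
       (\<exists>n\<in>F. v n \<ge> int (nbcount d F n))}"

end

theory Submission
  imports Defs
begin

(* For n in Z^d the product with f = gamma - sum_i (u_i + u_i^-1) acts as a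
   discrete Laplacian: (f.h)_n = gamma h_n - sum of h over the 2d lattice neighbours of n.
   (1) => (3) is a maximum principle: for h with a positive coefficient let M >= 1 be its
   maximum and F the finite set where it is attained.  Recurrence of v gives n in F with
   v_n >= N_F(n); since h <= M on F and h <= M - 1 off F, the neighbour sum at n is at
   most M*2d - (2d - N_F(n)), whence (f.h)_n + v_n >= gamma + (gamma - 2d)(M - 1) >= gamma.
   (3) => (2) is immediate, and (2) => (1) follows by testing with the indicator h = 1_F,
   for which (f.1_F)_n = gamma - N_F(n) on F.  The final claim also comes from the
   maximum principle: if w - w' = f.g with g nonzero, apply it to g and w' (or to -g and
   w) and compare with the bound w_n, w'_n <= gamma - 1.
   The file first develops the neighbourhood geometry and the Laplacian formula, then the
   counting bound and the maximum principle, and derives the theorem at the end. *)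

section \<open>Lattice neighbourhoods\<close>

definition nbhd :: "nat \<Rightarrow> int list \<Rightarrow> int list set" where
  "nbhd d n = {m. \<exists>i<d. m = vadd n (unitv d i) \<or> m = vsub n (unitv d i)}"

definition unit_dirs :: "nat \<Rightarrow> int list set" where
  "unit_dirs d = unitv d ` {..<d} \<union> (\<lambda>i. vneg (unitv d i)) ` {..<d}"

lemma nbhd_as_images:
  "nbhd d n = (\<lambda>i. vadd n (unitv d i)) ` {..<d} \<union> (\<lambda>i. vsub n (unitv d i)) ` {..<d}"
  unfolding nbhd_def by auto

lemma finite_nbhd: "finite (nbhd d n)"
  unfolding nbhd_as_images by auto

text \<open>A point has at most 2d neighbours; this is where gamma >= 2d enters.\<close>
lemma card_nbhd_le: "card (nbhd d n) \<le> 2 * d"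
proof -
  have "card (nbhd d n) \<le> card ((\<lambda>i. vadd n (unitv d i)) ` {..<d})
                          + card ((\<lambda>i. vsub n (unitv d i)) ` {..<d})"
    unfolding nbhd_as_images by (rule card_Un_le)
  also have "\<dots> \<le> d + d"
    by (intro add_mono) (metis card_image_le card_lessThan finite_lessThan)+
  finally show ?thesis by simp
qed

lemma nbcount_eq_card: "nbcount d F n = card (F \<inter> nbhd d n)"
  by (simp add: nbcount_def nbhd_def)

lemma length_unitv [simp]: "length (unitv d i) = d"
  by (simp add: unitv_def)

lemma finite_unit_dirs: "finite (unit_dirs d)"
  by (simp add: unit_dirs_def)

lemma length_unit_dirs: "k \<in> unit_dirs d \<Longrightarrow> length k = d"
  by (auto simp: unit_dirs_def vneg_def)

lemma origin_notin_unit_dirs: "replicate d 0 \<notin> unit_dirs d"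
proof
  assume "replicate d 0 \<in> unit_dirs d"
  then obtain i where i: "i < d"
    and "replicate d 0 = unitv d i \<or> replicate d 0 = vneg (unitv d i)"
    unfolding unit_dirs_def by auto
  moreover have "unitv d i ! i = 1" "vneg (unitv d i) ! i = -1"
    using i by (simp_all add: unitv_def vneg_def)
  ultimately show False
    using i by (metis nth_replicate one_neq_zero zero_neq_neg_one)
qed

lemma vsub_vneg: "length n = length u \<Longrightarrow> vsub n (vneg u) = vadd n u"
  by (simp add: vsub_def vadd_def vneg_def list_eq_iff_nth_eq)

lemma unit_dirs_translate:
  assumes "length n = d"
  shows "(\<lambda>k. vsub n k) ` unit_dirs d = nbhd d n"
proof
  show "(\<lambda>k. vsub n k) ` unit_dirs d \<subseteq> nbhd d n"
    unfolding unit_dirs_def nbhd_as_images using assms by (auto simp: vsub_vneg)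
  show "nbhd d n \<subseteq> (\<lambda>k. vsub n k) ` unit_dirs d"
  proof
    fix m assume "m \<in> nbhd d n"
    then obtain i where i: "i < d"
      and "m = vsub n (vneg (unitv d i)) \<or> m = vsub n (unitv d i)"
      unfolding nbhd_def using assms by (auto simp: vsub_vneg)
    then show "m \<in> (\<lambda>k. vsub n k) ` unit_dirs d"
      unfolding unit_dirs_def by blast
  qed
qed

lemma inj_on_translate_unit_dirs:
  assumes n: "length n = d"
  shows "inj_on (\<lambda>k. vsub n k) (unit_dirs d)"
proof (rule inj_onI)
  fix k k' assume k: "k \<in> unit_dirs d" and k': "k' \<in> unit_dirs d"
    and eq: "vsub n k = vsub n k'"
  have len: "length k = d" "length k' = d"
    using length_unit_dirs k k' by auto
  show "k = k'"
  proof (rule nth_equalityI)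
    show "length k = length k'" using len by simp
    fix i assume "i < length k"
    then show "k ! i = k' ! i"
      using arg_cong[OF eq, of "\<lambda>x. x ! i"] len n by (simp add: vsub_def)
  qed
qed

section \<open>Multiplication by f as a discrete Laplacian\<close>

lemma conv_over_superset:
  assumes "finite T" "supp a \<subseteq> T"
  shows "conv a b n = (\<Sum>k\<in>T. a k * b (vsub n k))"
  unfolding conv_def using assms by (intro sum.mono_neutral_left) (auto simp: supp_def)

lemma conv_uminus_right: "conv a (\<lambda>n. - g n) m = - conv a g m"
  by (simp add: conv_def sum_negf)

lemma supp_fpoly: "supp (fpoly d \<gamma>) \<subseteq> insert (replicate d 0) (unit_dirs d)"
  by (auto simp: supp_def fpoly_def unit_dirs_def split: if_splits)

lemma fpoly_unit_dirs:
  assumes "k \<in> unit_dirs d"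
  shows "fpoly d \<gamma> k = -1"
proof -
  have "k \<noteq> replicate d 0" using origin_notin_unit_dirs[of d] assms by auto
  moreover have "\<exists>i<d. k = unitv d i \<or> k = vneg (unitv d i)"
    using assms by (auto simp: unit_dirs_def)
  ultimately show ?thesis by (simp add: fpoly_def)
qed

lemma conv_fpoly:
  assumes "length n = d"
  shows "conv (fpoly d \<gamma>) h n = \<gamma> * h n - (\<Sum>m\<in>nbhd d n. h m)"
proof -
  have origin: "vsub n (replicate d 0) = n"
    using assms by (simp add: vsub_def list_eq_iff_nth_eq)
  have "conv (fpoly d \<gamma>) h n
        = (\<Sum>k\<in>insert (replicate d 0) (unit_dirs d). fpoly d \<gamma> k * h (vsub n k))"
    using finite_unit_dirs supp_fpoly by (intro conv_over_superset) auto
  also have "\<dots> = \<gamma> * h n - (\<Sum>k\<in>unit_dirs d. h (vsub n k))"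
    using origin_notin_unit_dirs[of d] finite_unit_dirs[of d] origin
    by (simp add: fpoly_def[of d \<gamma> "replicate d 0"] fpoly_unit_dirs sum_negf)
  also have "(\<Sum>k\<in>unit_dirs d. h (vsub n k)) = (\<Sum>m\<in>nbhd d n. h m)"
    using sum.reindex[OF inj_on_translate_unit_dirs[OF assms], of h]
      unit_dirs_translate[OF assms] by (simp add: comp_def)
  finally show ?thesis .
qed

lemma conv_fpoly_indicator:
  assumes "length n = d" "n \<in> F"
  shows "conv (fpoly d \<gamma>) (\<lambda>m. if m \<in> F then 1 else 0) n = \<gamma> - int (nbcount d F n)"
  using assms finite_nbhd[of d n]
  by (simp add: conv_fpoly sum.If_cases nbcount_eq_card Int_commute)

section \<open>The maximum principle for recurrent configurations\<close>

lemma sum_le_top_level: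
  fixes h :: "'a \<Rightarrow> int"
  assumes "finite A" "\<And>m. m \<in> F \<Longrightarrow> h m \<le> M" "\<And>m. m \<notin> F \<Longrightarrow> h m \<le> M - 1"
  shows "(\<Sum>m\<in>A. h m) \<le> M * int (card A) - int (card (A - F))"
proof -
  have "(\<Sum>m\<in>A. h m) \<le> (\<Sum>m\<in>A. M - (if m \<in> F then 0 else 1))"
    using assms(2,3) by (intro sum_mono) auto
  also have "\<dots> = M * int (card A) - int (card (A - F))"
    using assms(1) by (simp add: sum_subtractf sum.If_cases Diff_eq)
  finally show ?thesis .
qed

lemma top_level_set:
  assumes h: "h \<in> Rd d" and pos: "h n0 > 0"
  obtains M where "M \<ge> 1" "\<And>m. h m \<le> M" "finite {m. h m = M}"
    "{m. h m = M} \<noteq> {}" "{m. h m = M} \<subseteq> pts d"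
proof -
  have fin: "finite (supp h)" and sub: "supp h \<subseteq> pts d"
    using h by (auto simp: Rd_def)
  have n0: "n0 \<in> supp h" using pos by (simp add: supp_def)
  define M where "M = Max (h ` supp h)"
  have M_in: "M \<in> h ` supp h" unfolding M_def using fin n0 by (intro Max_in) auto
  have max_le: "h m \<le> M" if "m \<in> supp h" for m
    unfolding M_def using fin that by simp
  have h_le: "h m \<le> M" for m
    using max_le[of m] max_le[OF n0] pos by (cases "m \<in> supp h") (auto simp: supp_def)
  have M_pos: "M \<ge> 1" using h_le[of n0] pos by simp
  have level_sub: "{m. h m = M} \<subseteq> supp h" using M_pos by (auto simp: supp_def)
  show thesis
  proof
    show "finite {m. h m = M}" using fin level_sub by (rule finite_subset[rotated])
    show "{m. h m = M} \<subseteq> pts d" using level_sub sub by blast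
  qed (use M_pos h_le M_in in auto)
qed

lemma recurrent_max_principle:
  assumes v: "v \<in> recurrent d \<gamma>" and \<gamma>: "\<gamma> \<ge> 2 * int d"
    and h: "h \<in> Rd d" and pos: "h n0 > 0"
  shows "\<exists>n. h n > 0 \<and> conv (fpoly d \<gamma>) h n + v n \<ge> \<gamma>"
proof -
  obtain M where M_pos: "M \<ge> 1" and h_le: "\<And>m. h m \<le> M"
    and F: "finite {m. h m = M}" "{m. h m = M} \<noteq> {}" "{m. h m = M} \<subseteq> pts d"
    using top_level_set[OF h pos] by blast
  define F where "F = {m. h m = M}"
  obtain n where nF: "n \<in> F" and vn: "v n \<ge> int (nbcount d F n)"
    using v F unfolding recurrent_def F_def by blast
  define A where "A = nbhd d n"
  have len: "length n = d" using nF F by (auto simp: F_def pts_def)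
  have hn: "h n = M" using nF by (simp add: F_def)
  have below: "h m \<le> M - 1" if "m \<notin> F" for m
    using h_le[of m] that by (simp add: F_def)
  have sum_A: "(\<Sum>m\<in>A. h m) \<le> M * int (card A) - int (card (A - F))"
    using finite_nbhd h_le below unfolding A_def by (intro sum_le_top_level) auto
  have card_split: "card A = card (A \<inter> F) + card (A - F)"
    using finite_nbhd unfolding A_def by (rule card_Int_Diff)
  have vn': "v n \<ge> int (card (A \<inter> F))"
    using vn by (simp add: nbcount_eq_card A_def Int_commute)
  have "(\<gamma> - int (card A)) * (M - 1) \<ge> 0"
    using card_nbhd_le[of d n] \<gamma> M_pos unfolding A_def by simp
  then have "\<gamma> \<le> \<gamma> * M - (M - 1) * int (card A)"
    by (simp add: algebra_simps)
  also have "\<dots> \<le> conv (fpoly d \<gamma>) h n + v n"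
    using conv_fpoly[OF len, of \<gamma> h] hn sum_A vn' card_split unfolding A_def
    by (simp add: algebra_simps)
  finally show ?thesis using hn M_pos by (intro exI[of _ n]) auto
qed

text \<open>Implication (2) => (1): test the hypothesis on indicators of finite sets.\<close>
lemma recurrent_if_indicator_condition:
  assumes v: "v \<in> Lambda d \<gamma>"
    and H: "\<forall>h\<in>Rd d. h \<noteq> (\<lambda>_. 0) \<and> (\<forall>n. h n \<in> {0, 1}) \<longrightarrow>
              (\<exists>n\<in>supp h. conv (fpoly d \<gamma>) h n + v n \<ge> \<gamma>)"
  shows "v \<in> recurrent d \<gamma>"
  unfolding recurrent_def
proof (intro CollectI conjI allI impI v)
  fix F :: "int list set" assume F: "finite F \<and> F \<noteq> {} \<and> F \<subseteq> pts d"
  define h where "h = (\<lambda>m. if m \<in> F then 1 else 0 :: int)"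
  have supp_h: "supp h = F" by (auto simp: h_def supp_def)
  have "h \<in> Rd d" using F supp_h by (simp add: Rd_def)
  moreover have "h \<noteq> (\<lambda>_. 0)" using F supp_h by (auto simp: supp_def)
  moreover have "\<forall>n. h n \<in> {0, 1}" by (simp add: h_def)
  ultimately obtain n where n: "n \<in> F" and top: "conv (fpoly d \<gamma>) h n + v n \<ge> \<gamma>"
    using H supp_h by blast
  have "length n = d" using n F by (auto simp: pts_def)
  then show "\<exists>n\<in>F. int (nbcount d F n) \<le> v n"
    using top n conv_fpoly_indicator[of n d F \<gamma>] by (auto simp: h_def)
qed

lemma indicator_condition_if_positive_condition:
  assumes H: "\<forall>h\<in>Rd d. (\<exists>n. h n > 0) \<longrightarrow>
              (\<exists>n. h n > 0 \<and> conv (fpoly d \<gamma>) h n + v n \<ge> \<gamma>)"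
  shows "\<forall>h\<in>Rd d. h \<noteq> (\<lambda>_. 0) \<and> (\<forall>n. h n \<in> {0, 1}) \<longrightarrow>
              (\<exists>n\<in>supp h. conv (fpoly d \<gamma>) h n + v n \<ge> \<gamma>)"
proof (intro ballI impI)
  fix h assume h: "h \<in> Rd d" and h01: "h \<noteq> (\<lambda>_. 0) \<and> (\<forall>n. h n \<in> {0, 1})"
  then obtain n0 where "h n0 \<noteq> 0" by auto
  then have "h n0 > 0" using h01 by (metis insertE singletonD zero_less_one)
  then obtain n where "h n > 0" "conv (fpoly d \<gamma>) h n + v n \<ge> \<gamma>"
    using H h by blast
  then show "\<exists>n\<in>supp h. conv (fpoly d \<gamma>) h n + v n \<ge> \<gamma>"
    by (intro bexI[of _ n]) (auto simp: supp_def)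
qed

lemma recurrent_le:
  assumes "u \<in> recurrent d \<gamma>" "\<gamma> \<ge> 1"
  shows "u n \<le> \<gamma> - 1"
  using assms by (cases "n \<in> pts d") (auto simp: recurrent_def Lambda_def)

text \<open>The difference of two recurrent configurations is never f.g with g having a positive
  coefficient: the maximum principle for g and w' would force w_n >= gamma.\<close>
lemma recurrent_diff_not_laplacian:
  assumes w: "w \<in> recurrent d \<gamma>" and w': "w' \<in> recurrent d \<gamma>"
    and \<gamma>: "\<gamma> \<ge> 2 * int d" "\<gamma> \<ge> 1" and g: "g \<in> Rd d" and pos: "g n0 > 0"
  shows "(\<lambda>n. w n - w' n) \<noteq> conv (fpoly d \<gamma>) g"
proof
  assume eq: "(\<lambda>n. w n - w' n) = conv (fpoly d \<gamma>) g"
  obtain n where "conv (fpoly d \<gamma>) g n + w' n \<ge> \<gamma>"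
    using recurrent_max_principle[OF w' \<gamma>(1) g pos] by blast
  then have "w n \<ge> \<gamma>" using fun_cong[OF eq, of n] by simp
  then show False using recurrent_le[OF w \<gamma>(2), of n] by linarith
qed

text \<open>Final claim of the proposition: a nonzero difference of recurrent configurations
  is not in the ideal generated by f.  Apply the previous lemma to g or to -g.\<close>
lemma recurrent_diff_notin_ideal:
  assumes w: "w \<in> recurrent d \<gamma>" and w': "w' \<in> recurrent d \<gamma>"
    and \<gamma>: "\<gamma> \<ge> 2 * int d" "\<gamma> \<ge> 1" and nz: "(\<lambda>n. w n - w' n) \<noteq> (\<lambda>_. 0)"
  shows "\<not> (\<exists>g\<in>Rd d. (\<lambda>n. w n - w' n) = conv (fpoly d \<gamma>) g)"
proof
  assume "\<exists>g\<in>Rd d. (\<lambda>n. w n - w' n) = conv (fpoly d \<gamma>) g"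
  then obtain g where g: "g \<in> Rd d" and eq: "(\<lambda>n. w n - w' n) = conv (fpoly d \<gamma>) g"
    by blast
  have "g \<noteq> (\<lambda>_. 0)" using eq nz by (auto simp: conv_def)
  then obtain n0 where "g n0 > 0 \<or> - g n0 > 0"
    by (metis neg_0_less_iff_less not_less_iff_gr_or_eq)
  moreover have "(\<lambda>n. - g n) \<in> Rd d" using g by (simp add: Rd_def supp_def)
  moreover have "(\<lambda>n. w' n - w n) = conv (fpoly d \<gamma>) (\<lambda>n. - g n)"
  proof
    fix n show "w' n - w n = conv (fpoly d \<gamma>) (\<lambda>n. - g n) n"
      using fun_cong[OF eq, of n] by (simp add: conv_uminus_right)
  qed
  ultimately show False
    using recurrent_diff_not_laplacian[OF w w' \<gamma> g, of n0] eq
      recurrent_diff_not_laplacian[OF w' w \<gamma>, of "\<lambda>n. - g n" n0] by auto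
qed

theorem proposition4p1:
  fixes d :: nat and \<gamma> :: int and v :: "int list \<Rightarrow> int"
  assumes "d \<ge> 2" and "\<gamma> \<ge> 2 * int d" and "v \<in> Lambda d \<gamma>"
  shows "(v \<in> recurrent d \<gamma> \<longleftrightarrow>
           (\<forall>h\<in>Rd d. h \<noteq> (\<lambda>_. 0) \<and> (\<forall>n. h n \<in> {0, 1}) \<longrightarrow>
              (\<exists>n\<in>supp h. conv (fpoly d \<gamma>) h n + v n \<ge> \<gamma>)))
       \<and> (v \<in> recurrent d \<gamma> \<longleftrightarrow>
           (\<forall>h\<in>Rd d. (\<exists>n. h n > 0) \<longrightarrow>
              (\<exists>n. h n > 0 \<and> conv (fpoly d \<gamma>) h n + v n \<ge> \<gamma>)))
       \<and> (\<forall>w w'. w \<in> recurrent d \<gamma> \<and> w' \<in> recurrent d \<gamma> \<and>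
              (\<lambda>n. w n - w' n) \<in> Rd d \<and> (\<lambda>n. w n - w' n) \<noteq> (\<lambda>_. 0) \<longrightarrow>
              \<not> (\<exists>g\<in>Rd d. (\<lambda>n. w n - w' n) = conv (fpoly d \<gamma>) g))"
proof -
  have \<gamma>_pos: "\<gamma> \<ge> 1" using assms(1,2) by linarith
  have one_imp_three: "\<forall>h\<in>Rd d. (\<exists>n. h n > 0) \<longrightarrow>
      (\<exists>n. h n > 0 \<and> conv (fpoly d \<gamma>) h n + v n \<ge> \<gamma>)" if "v \<in> recurrent d \<gamma>"
    using recurrent_max_principle[OF that assms(2)] by blast
  show ?thesis
    using one_imp_three indicator_condition_if_positive_condition
      recurrent_if_indicator_condition[OF assms(3)]
      recurrent_diff_notin_ideal[OF _ _ assms(2) \<gamma>_pos] by blast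
qed

end
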